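(* Let $\mathcal D$ be a complete, cocomplete, extremally co-well-powered (extremal epi, mono) category. Then $\mathcal Q(\mathcal D)$ is an (extremal epi, mono) category.
   Context: For a category $\mathcal D$ and an object $d$, $M(d)$ denotes the class of all morphisms with source $d$, quasi-ordered by $\phi_1\ge\phi_2$ iff there is $h$ with $h\phi_1=\phi_2$. A projective filtration on $d$ is a non-empty, directed, saturated subclass $F\subseteq M(d)$ (saturated: $\phi_1\in F$, $\phi_1\ge\phi_2$ imply $\phi_2\in F$). A subclass $S\subseteq F$ is initial if every $\phi\in F$ satisfies $\phi\le\psi$ for some $\psi\in S$. For $f\colon d'\to d$, $f^*(F)=\{\phi f:\phi\in F\}$. $\mathcal P(\mathcal D)$ has objects $(d,F)$, and morphisms $(d_1,F_1)\to(d_2,F_2)$ the morphisms $f\colon d_1\to d_2$ of $\mathcal D$ with $f^*(F_2)\subseteq F_1$. $F$ is reduced if it has an initial subclass of extremal epimorphisms; $\mathcal Q(\mathcal D)$ is the full subcategory of $\mathcal P(\mathcal D)$ of reduced filtered objects. An (extremal epi, mono) category is one in which every morphism factors as an extremal epimorphism followed by a monomorphism and such factorisations have the unique diagonal fill-in property. *)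

theory Defs
  imports Main
begin

record ('o, 'm) cat =
  Ob   :: "'o set"
  Ar   :: "'m set"
  dom  :: "'m \<Rightarrow> 'o"
  cod  :: "'m \<Rightarrow> 'o"
  idt  :: "'o \<Rightarrow> 'm"
  comp :: "'m \<Rightarrow> 'm \<Rightarrow> 'm"   (* comp C g f = g o f, defined when cod f = dom g *)

definition is_cat :: "('o, 'm, 'x) cat_scheme \<Rightarrow> bool" where
  "is_cat C \<longleftrightarrow>
     (\<forall>f\<in>Ar C. dom C f \<in> Ob C \<and> cod C f \<in> Ob C) \<and>
     (\<forall>a\<in>Ob C. idt C a \<in> Ar C \<and> dom C (idt C a) = a \<and> cod C (idt C a) = a) \<and>
     (\<forall>f\<in>Ar C. \<forall>g\<in>Ar C. cod C f = dom C g \<longrightarrow>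
        comp C g f \<in> Ar C \<and> dom C (comp C g f) = dom C f \<and> cod C (comp C g f) = cod C g) \<and>
     (\<forall>f\<in>Ar C. comp C (idt C (cod C f)) f = f \<and> comp C f (idt C (dom C f)) = f) \<and>
     (\<forall>f\<in>Ar C. \<forall>g\<in>Ar C. \<forall>h\<in>Ar C. cod C f = dom C g \<and> cod C g = dom C h \<longrightarrow>
        comp C h (comp C g f) = comp C (comp C h g) f)"

definition hom :: "('o, 'm, 'x) cat_scheme \<Rightarrow> 'o \<Rightarrow> 'o \<Rightarrow> 'm set" where
  "hom C a b = {f \<in> Ar C. dom C f = a \<and> cod C f = b}"

definition mono :: "('o, 'm, 'x) cat_scheme \<Rightarrow> 'm \<Rightarrow> bool" where
  "mono C m \<longleftrightarrow> m \<in> Ar C \<and>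
     (\<forall>f\<in>Ar C. \<forall>g\<in>Ar C. cod C f = dom C m \<and> cod C g = dom C m \<and> dom C f = dom C g \<and>
        comp C m f = comp C m g \<longrightarrow> f = g)"

definition epi :: "('o, 'm, 'x) cat_scheme \<Rightarrow> 'm \<Rightarrow> bool" where
  "epi C e \<longleftrightarrow> e \<in> Ar C \<and>
     (\<forall>f\<in>Ar C. \<forall>g\<in>Ar C. dom C f = cod C e \<and> dom C g = cod C e \<and> cod C f = cod C g \<and>
        comp C f e = comp C g e \<longrightarrow> f = g)"

definition iso :: "('o, 'm, 'x) cat_scheme \<Rightarrow> 'm \<Rightarrow> bool" where
  "iso C f \<longleftrightarrow> f \<in> Ar C \<and>
     (\<exists>g\<in>Ar C. dom C g = cod C f \<and> cod C g = dom C f \<and>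
        comp C g f = idt C (dom C f) \<and> comp C f g = idt C (cod C f))"

definition ext_epi :: "('o, 'm, 'x) cat_scheme \<Rightarrow> 'm \<Rightarrow> bool" where
  "ext_epi C e \<longleftrightarrow> epi C e \<and>
     (\<forall>m\<in>Ar C. \<forall>g\<in>Ar C. mono C m \<and> cod C g = dom C m \<and> comp C m g = e \<longrightarrow> iso C m)"

definition has_ext_epi_mono_factorizations :: "('o, 'm, 'x) cat_scheme \<Rightarrow> bool" where
  "has_ext_epi_mono_factorizations C \<longleftrightarrow>
     (\<forall>f\<in>Ar C. \<exists>e m. ext_epi C e \<and> mono C m \<and> cod C e = dom C m \<and> comp C m e = f)"

definition has_diagonal_fill_in :: "('o, 'm, 'x) cat_scheme \<Rightarrow> bool" where
  "has_diagonal_fill_in C \<longleftrightarrow>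
     (\<forall>e m u v. ext_epi C e \<and> mono C m \<and> u \<in> Ar C \<and> v \<in> Ar C \<and>
        dom C u = dom C e \<and> cod C u = dom C m \<and> dom C v = cod C e \<and> cod C v = cod C m \<and>
        comp C v e = comp C m u \<longrightarrow>
        (\<exists>!d. d \<in> Ar C \<and> dom C d = cod C e \<and> cod C d = dom C m \<and>
              comp C d e = u \<and> comp C m d = v))"

definition ext_epi_mono_cat :: "('o, 'm, 'x) cat_scheme \<Rightarrow> bool" where
  "ext_epi_mono_cat C \<longleftrightarrow> is_cat C \<and> has_ext_epi_mono_factorizations C \<and> has_diagonal_fill_in C"

definition small :: "'u itself \<Rightarrow> 'a set \<Rightarrow> bool" where
  "small u A \<longleftrightarrow> ordLess2 (card_of A) (card_of (UNIV :: 'u set))"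

text \<open>The cardinality of 'u is strongly inaccessible (uncountable, regular, strong limit),
  i.e. the size of a Grothendieck universe.\<close>
definition universe_type :: "'u itself \<Rightarrow> bool" where
  "universe_type u \<longleftrightarrow>
     ordLess2 (card_of (UNIV :: nat set)) (card_of (UNIV :: 'u set)) \<and>
     regularCard (card_of (UNIV :: 'u set)) \<and>
     (\<forall>A :: 'u set. small u A \<longrightarrow> small u (Pow A))"

definition locally_small :: "'u itself \<Rightarrow> ('o, 'm, 'x) cat_scheme \<Rightarrow> bool" where
  "locally_small u C \<longleftrightarrow> (\<forall>a\<in>Ob C. \<forall>b\<in>Ob C. small u (hom C a b))"

definition diagram :: "('i, 'j) cat \<Rightarrow> ('o, 'm, 'x) cat_scheme \<Rightarrow> ('i \<Rightarrow> 'o) \<Rightarrow> ('j \<Rightarrow> 'm) \<Rightarrow> bool" where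
  "diagram J C Fo Fa \<longleftrightarrow> is_cat J \<and>
     (\<forall>j\<in>Ob J. Fo j \<in> Ob C) \<and>
     (\<forall>a\<in>Ar J. Fa a \<in> hom C (Fo (dom J a)) (Fo (cod J a))) \<and>
     (\<forall>j\<in>Ob J. Fa (idt J j) = idt C (Fo j)) \<and>
     (\<forall>a\<in>Ar J. \<forall>b\<in>Ar J. cod J a = dom J b \<longrightarrow> Fa (comp J b a) = comp C (Fa b) (Fa a))"

definition cone :: "('i, 'j) cat \<Rightarrow> ('o, 'm, 'x) cat_scheme \<Rightarrow> ('i \<Rightarrow> 'o) \<Rightarrow> ('j \<Rightarrow> 'm) \<Rightarrow> 'o \<Rightarrow> ('i \<Rightarrow> 'm) \<Rightarrow> bool" where
  "cone J C Fo Fa c l \<longleftrightarrow> c \<in> Ob C \<and>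
     (\<forall>j\<in>Ob J. l j \<in> hom C c (Fo j)) \<and>
     (\<forall>a\<in>Ar J. comp C (Fa a) (l (dom J a)) = l (cod J a))"

definition limit :: "('i, 'j) cat \<Rightarrow> ('o, 'm, 'x) cat_scheme \<Rightarrow> ('i \<Rightarrow> 'o) \<Rightarrow> ('j \<Rightarrow> 'm) \<Rightarrow> 'o \<Rightarrow> ('i \<Rightarrow> 'm) \<Rightarrow> bool" where
  "limit J C Fo Fa c l \<longleftrightarrow> cone J C Fo Fa c l \<and>
     (\<forall>c' l'. cone J C Fo Fa c' l' \<longrightarrow>
        (\<exists>!h. h \<in> hom C c' c \<and> (\<forall>j\<in>Ob J. comp C (l j) h = l' j)))"

definition cocone :: "('i, 'j) cat \<Rightarrow> ('o, 'm, 'x) cat_scheme \<Rightarrow> ('i \<Rightarrow> 'o) \<Rightarrow> ('j \<Rightarrow> 'm) \<Rightarrow> 'o \<Rightarrow> ('i \<Rightarrow> 'm) \<Rightarrow> bool" where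
  "cocone J C Fo Fa c l \<longleftrightarrow> c \<in> Ob C \<and>
     (\<forall>j\<in>Ob J. l j \<in> hom C (Fo j) c) \<and>
     (\<forall>a\<in>Ar J. comp C (l (cod J a)) (Fa a) = l (dom J a))"

definition colimit :: "('i, 'j) cat \<Rightarrow> ('o, 'm, 'x) cat_scheme \<Rightarrow> ('i \<Rightarrow> 'o) \<Rightarrow> ('j \<Rightarrow> 'm) \<Rightarrow> 'o \<Rightarrow> ('i \<Rightarrow> 'm) \<Rightarrow> bool" where
  "colimit J C Fo Fa c l \<longleftrightarrow> cocone J C Fo Fa c l \<and>
     (\<forall>c' l'. cocone J C Fo Fa c' l' \<longrightarrow>
        (\<exists>!h. h \<in> hom C c c' \<and> (\<forall>j\<in>Ob J. comp C h (l j) = l' j)))"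

text \<open>Complete / cocomplete: (co)limits of all small diagrams; every small index
  category is (up to isomorphism) one with objects and arrows in 'u.\<close>
definition complete :: "'u itself \<Rightarrow> ('o, 'm, 'x) cat_scheme \<Rightarrow> bool" where
  "complete u C \<longleftrightarrow>
     (\<forall>(J :: ('u, 'u) cat) Fo Fa. small u (Ob J) \<and> small u (Ar J) \<and> diagram J C Fo Fa \<longrightarrow>
        (\<exists>c l. limit J C Fo Fa c l))"

definition cocomplete :: "'u itself \<Rightarrow> ('o, 'm, 'x) cat_scheme \<Rightarrow> bool" where
  "cocomplete u C \<longleftrightarrow>
     (\<forall>(J :: ('u, 'u) cat) Fo Fa. small u (Ob J) \<and> small u (Ar J) \<and> diagram J C Fo Fa \<longrightarrow>
        (\<exists>c l. colimit J C Fo Fa c l))"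

definition ext_co_well_powered :: "'u itself \<Rightarrow> ('o, 'm, 'x) cat_scheme \<Rightarrow> bool" where
  "ext_co_well_powered u C \<longleftrightarrow>
     (\<forall>d\<in>Ob C. \<exists>S. small u S \<and> (\<forall>s\<in>S. ext_epi C s \<and> dom C s = d) \<and>
        (\<forall>e. ext_epi C e \<and> dom C e = d \<longrightarrow>
           (\<exists>s\<in>S. \<exists>i. iso C i \<and> dom C i = cod C e \<and> cod C i = cod C s \<and> comp C i e = s)))"

definition Mor_from :: "('o, 'm, 'x) cat_scheme \<Rightarrow> 'o \<Rightarrow> 'm set" where
  "Mor_from C d = {f \<in> Ar C. dom C f = d}"

definition mgeq :: "('o, 'm, 'x) cat_scheme \<Rightarrow> 'm \<Rightarrow> 'm \<Rightarrow> bool" where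
  "mgeq C p1 p2 \<longleftrightarrow> (\<exists>h\<in>Ar C. dom C h = cod C p1 \<and> comp C h p1 = p2)"

definition proj_filtration :: "('o, 'm, 'x) cat_scheme \<Rightarrow> 'o \<Rightarrow> 'm set \<Rightarrow> bool" where
  "proj_filtration C d F \<longleftrightarrow> F \<subseteq> Mor_from C d \<and> F \<noteq> {} \<and>
     (\<forall>p1\<in>F. \<forall>p2\<in>F. \<exists>q\<in>F. mgeq C q p1 \<and> mgeq C q p2) \<and>
     (\<forall>p1\<in>F. \<forall>p2\<in>Mor_from C d. mgeq C p1 p2 \<longrightarrow> p2 \<in> F)"

definition initial_sub :: "('o, 'm, 'x) cat_scheme \<Rightarrow> 'm set \<Rightarrow> 'm set \<Rightarrow> bool" where
  "initial_sub C F S \<longleftrightarrow> S \<subseteq> F \<and> (\<forall>p\<in>F. \<exists>q\<in>S. mgeq C q p)"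

definition reduced :: "('o, 'm, 'x) cat_scheme \<Rightarrow> 'm set \<Rightarrow> bool" where
  "reduced C F \<longleftrightarrow> (\<exists>S. initial_sub C F S \<and> (\<forall>s\<in>S. ext_epi C s))"

definition pull :: "('o, 'm, 'x) cat_scheme \<Rightarrow> 'm \<Rightarrow> 'm set \<Rightarrow> 'm set" where
  "pull C f F = {comp C p f | p. p \<in> F}"

definition Qcat :: "('o, 'm, 'x) cat_scheme \<Rightarrow>
    ('o \<times> 'm set, 'm \<times> ('o \<times> 'm set) \<times> ('o \<times> 'm set)) cat" where
  "Qcat C = (let QO = {(d, F). d \<in> Ob C \<and> proj_filtration C d F \<and> reduced C F} in
     \<lparr> Ob = QO,
       Ar = {(f, X, Y). X \<in> QO \<and> Y \<in> QO \<and> f \<in> hom C (fst X) (fst Y) \<and>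
                         pull C f (snd Y) \<subseteq> snd X},
       dom = (\<lambda>(f, X, Y). X),
       cod = (\<lambda>(f, X, Y). Y),
       idt = (\<lambda>X. (idt C (fst X), X, X)),
       comp = (\<lambda>(g, Y', Z) (f, X, Y). (comp C g f, X, Z)) \<rparr>)"

end

theory Submission
  imports Defs
begin

text \<open>
  The central notion is the push-forward g_*(F) = {p. p o g \<in> F} of a filtration F on the
  domain of g.  A morphism (d1, F1) \<rightarrow> (d2, F2) of Q(D) is then a morphism f of D with
  F2 \<subseteq> f_*(F1), and if F is a reduced projective filtration, so is every non-empty
  g_*(F): directedness uses binary products, reducedness uses the factorisations and the
  diagonal fill-in of D.

  The extremal epimorphisms of Q(D) are
  characterised as the morphisms (e, F1, F2) with e an extremal epimorphism of D and
  F2 = e_*(F1).  Factorisations in Q(D) factor through (cod e, e_*(F1)); diagonals are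
  those of D, which respect the filtrations by this characterisation.
\<close>

lemma universe_infinite:
  assumes "universe_type TYPE('u)"
  shows "infinite (UNIV :: 'u set)"
  using assms infinite_iff_card_of_nat ordLess_imp_ordLeq unfolding universe_type_def by blast

lemma small_finite:
  assumes "universe_type TYPE('u)" and "finite A"
  shows "small TYPE('u) A"
  unfolding small_def
  by (rule finite_ordLess_infinite)
    (use universe_infinite[OF assms(1)] assms(2) in
      \<open>auto simp: card_of_Well_order Field_card_of card_of_well_order_on\<close>)

lemma universe_two_points:
  assumes "universe_type TYPE('u)"
  obtains a b :: 'u where "a \<noteq> b"
proof -
  obtain a :: 'u where True by blast
  have "(UNIV :: 'u set) \<noteq> {a}" using universe_infinite[OF assms] by (metis finite.simps)
  then obtain b where "b \<noteq> a" by auto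
  then show ?thesis using that by blast
qed

locale category =
  fixes C :: "('o, 'm) cat"
  assumes is_cat: "is_cat C"
begin

abbreviation cmp :: "'m \<Rightarrow> 'm \<Rightarrow> 'm" (infixr "\<cdot>" 70) where
  "g \<cdot> f \<equiv> comp C g f"

lemma dom_ob: "f \<in> Ar C \<Longrightarrow> dom C f \<in> Ob C"
  and cod_ob: "f \<in> Ar C \<Longrightarrow> cod C f \<in> Ob C"
  using is_cat unfolding is_cat_def by blast+

lemma id_ar [intro]: "a \<in> Ob C \<Longrightarrow> idt C a \<in> Ar C"
  and id_dom [simp]: "a \<in> Ob C \<Longrightarrow> dom C (idt C a) = a"
  and id_cod [simp]: "a \<in> Ob C \<Longrightarrow> cod C (idt C a) = a"
  using is_cat unfolding is_cat_def by blast+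

lemma comp_ar [intro]: "f \<in> Ar C \<Longrightarrow> g \<in> Ar C \<Longrightarrow> cod C f = dom C g \<Longrightarrow> g \<cdot> f \<in> Ar C"
  and comp_dom [simp]: "f \<in> Ar C \<Longrightarrow> g \<in> Ar C \<Longrightarrow> cod C f = dom C g \<Longrightarrow> dom C (g \<cdot> f) = dom C f"
  and comp_cod [simp]: "f \<in> Ar C \<Longrightarrow> g \<in> Ar C \<Longrightarrow> cod C f = dom C g \<Longrightarrow> cod C (g \<cdot> f) = cod C g"
  using is_cat unfolding is_cat_def by blast+

lemma id_left: "f \<in> Ar C \<Longrightarrow> cod C f = a \<Longrightarrow> idt C a \<cdot> f = f"
  and id_right: "f \<in> Ar C \<Longrightarrow> dom C f = a \<Longrightarrow> f \<cdot> idt C a = f"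
  using is_cat unfolding is_cat_def by blast+

lemma comp_id_cod [simp]: "f \<in> Ar C \<Longrightarrow> idt C (cod C f) \<cdot> f = f"
  and comp_id_dom [simp]: "f \<in> Ar C \<Longrightarrow> f \<cdot> idt C (dom C f) = f"
  using id_left id_right by blast+

lemma assoc:
  "f \<in> Ar C \<Longrightarrow> g \<in> Ar C \<Longrightarrow> h \<in> Ar C \<Longrightarrow> cod C f = dom C g \<Longrightarrow> cod C g = dom C h \<Longrightarrow>
   h \<cdot> g \<cdot> f = (h \<cdot> g) \<cdot> f"
  using is_cat unfolding is_cat_def by blast

lemma monoD:
  assumes "mono C m" and "f \<in> Ar C" and "g \<in> Ar C" and "cod C f = dom C m" and "cod C g = dom C m"
    and "dom C f = dom C g" and "m \<cdot> f = m \<cdot> g"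
  shows "f = g"
  using assms unfolding mono_def by blast

lemma epiD:
  assumes "epi C e" and "f \<in> Ar C" and "g \<in> Ar C" and "dom C f = cod C e" and "dom C g = cod C e"
    and "cod C f = cod C g" and "f \<cdot> e = g \<cdot> e"
  shows "f = g"
  using assms unfolding epi_def by blast

lemma mono_ar: "mono C m \<Longrightarrow> m \<in> Ar C"
  by (simp add: mono_def)

lemma ext_epi_ar: "ext_epi C e \<Longrightarrow> e \<in> Ar C"
  by (simp add: ext_epi_def epi_def)

lemma ext_epi_extremal:
  assumes "ext_epi C e" and "mono C m" and "g \<in> Ar C" and "cod C g = dom C m" and "m \<cdot> g = e"
  shows "iso C m"
  using assms mono_ar[OF assms(2)] unfolding ext_epi_def by blast

lemma isoE:
  assumes "iso C f"
  obtains k where "k \<in> Ar C" "dom C k = cod C f" "cod C k = dom C f"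
    "k \<cdot> f = idt C (dom C f)" "f \<cdot> k = idt C (cod C f)"
  using assms unfolding iso_def by blast

lemma id_mono:
  assumes a: "a \<in> Ob C"
  shows "mono C (idt C a)"
  unfolding mono_def
proof (intro conjI ballI impI)
  fix f g assume "f \<in> Ar C" "g \<in> Ar C"
    and "cod C f = dom C (idt C a) \<and> cod C g = dom C (idt C a) \<and> dom C f = dom C g \<and>
       idt C a \<cdot> f = idt C a \<cdot> g"
  then show "f = g" using id_left[of f a] id_left[of g a] id_dom[OF a] by metis
qed (use a in blast)

lemma split_mono_iso:
  assumes m: "mono C m" and g: "g \<in> Ar C" and gm: "cod C g = dom C m" and mg: "m \<cdot> g = idt C a"
    and a: "a \<in> Ob C"
  shows "iso C m"
proof -
  have mA: "m \<in> Ar C" using m by (rule mono_ar)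
  have cm: "cod C m = a" and dg: "dom C g = a"
    using comp_cod[OF g mA gm] comp_dom[OF g mA gm] mg a by simp_all
  have "m \<cdot> (g \<cdot> m) = (m \<cdot> g) \<cdot> m" using assoc[OF mA g mA] gm cm dg by simp
  also have "\<dots> = m \<cdot> idt C (dom C m)" using mg mA id_left[OF mA cm] by simp
  finally have "g \<cdot> m = idt C (dom C m)"
    using monoD[OF m] g mA gm cm dg dom_ob[OF mA] by (simp add: comp_ar id_ar)
  then show ?thesis unfolding iso_def using mA g gm cm dg mg by auto
qed

lemma id_ext_epi:
  assumes a: "a \<in> Ob C"
  shows "ext_epi C (idt C a)"
proof -
  have "epi C (idt C a)"
    unfolding epi_def
  proof (intro conjI ballI impI)
    fix f g assume "f \<in> Ar C" "g \<in> Ar C"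
      and "dom C f = cod C (idt C a) \<and> dom C g = cod C (idt C a) \<and> cod C f = cod C g \<and>
         f \<cdot> idt C a = g \<cdot> idt C a"
    then show "f = g" using id_right[of f a] id_right[of g a] id_cod[OF a] by metis
  qed (use a in blast)
  moreover have "iso C m"
    if "mono C m" "g \<in> Ar C" "cod C g = dom C m" "m \<cdot> g = idt C a" for m g
    using split_mono_iso[OF that a] .
  ultimately show ?thesis unfolding ext_epi_def by blast
qed

end

section \<open>Binary products from completeness\<close>

definition binary_product :: "('o, 'm, 'x) cat_scheme \<Rightarrow> 'o \<Rightarrow> 'o \<Rightarrow> 'o \<Rightarrow> 'm \<Rightarrow> 'm \<Rightarrow> bool" where
  "binary_product C x y P p1 p2 \<longleftrightarrow> P \<in> Ob C \<and> p1 \<in> hom C P x \<and> p2 \<in> hom C P y \<and>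
     (\<forall>z f1 f2. f1 \<in> hom C z x \<longrightarrow> f2 \<in> hom C z y \<longrightarrow>
        (\<exists>!h. h \<in> hom C z P \<and> comp C p1 h = f1 \<and> comp C p2 h = f2))"

definition has_binary_products :: "('o, 'm, 'x) cat_scheme \<Rightarrow> bool" where
  "has_binary_products C \<longleftrightarrow> (\<forall>x\<in>Ob C. \<forall>y\<in>Ob C. \<exists>P p1 p2. binary_product C x y P p1 p2)"

definition pair_cat :: "'u \<Rightarrow> 'u \<Rightarrow> ('u, 'u) cat" where
  "pair_cat a b = \<lparr>Ob = {a, b}, Ar = {a, b}, dom = id, cod = id, idt = id, comp = (\<lambda>g f. f)\<rparr>"

lemma pair_cat_simps [simp]:
  "Ob (pair_cat a b) = {a, b}" "Ar (pair_cat a b) = {a, b}"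
  "dom (pair_cat a b) = id" "cod (pair_cat a b) = id"
  "idt (pair_cat a b) = id" "comp (pair_cat a b) g f = f"
  by (simp_all add: pair_cat_def)

lemma pair_cat_is_cat: "is_cat (pair_cat a b)"
  unfolding is_cat_def by auto

context category
begin

lemma product_pairing:
  assumes "binary_product C x y P q1 q2" and "f1 \<in> hom C z x" and "f2 \<in> hom C z y"
  obtains h where "h \<in> hom C z P" "q1 \<cdot> h = f1" "q2 \<cdot> h = f2"
  using assms unfolding binary_product_def by blast

lemma product_unique:
  assumes P: "binary_product C x y P q1 q2" and u: "u \<in> hom C z P" and v: "v \<in> hom C z P"
    and "q1 \<cdot> u = q1 \<cdot> v" and "q2 \<cdot> u = q2 \<cdot> v"
  shows "u = v"
proof -
  have q: "q1 \<in> hom C P x" "q2 \<in> hom C P y" using P unfolding binary_product_def by blast+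
  have "q1 \<cdot> v \<in> hom C z x" "q2 \<cdot> v \<in> hom C z y"
    using q v comp_ar by (auto simp: hom_def)
  then show ?thesis using P u v assms(4,5) unfolding binary_product_def by blast
qed

lemma pair_diagram:
  assumes "x \<in> Ob C" and "y \<in> Ob C"
  shows "diagram (pair_cat a b) C (\<lambda>j. if j = a then x else y) (\<lambda>j. idt C (if j = a then x else y))"
proof -
  have "idt C c \<cdot> idt C c = idt C c" if "c \<in> Ob C" for c
    using that id_left id_ar by simp
  then show ?thesis
    using assms unfolding diagram_def by (auto simp: pair_cat_is_cat hom_def)
qed

lemma pair_cone_iff:
  assumes "a \<noteq> b"
  shows "cone (pair_cat a b) C (\<lambda>j. if j = a then x else y) (\<lambda>j. idt C (if j = a then x else y)) z l
     \<longleftrightarrow> z \<in> Ob C \<and> l a \<in> hom C z x \<and> l b \<in> hom C z y"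
  using assms by (auto simp: cone_def hom_def)

lemma complete_has_binary_products:
  assumes U: "universe_type TYPE('u)" and complete: "complete TYPE('u) C"
  shows "has_binary_products C"
  unfolding has_binary_products_def
proof (intro ballI)
  fix x y assume x: "x \<in> Ob C" and y: "y \<in> Ob C"
  obtain a b :: 'u where ab: "a \<noteq> b" using universe_two_points[OF U] .
  let ?J = "pair_cat a b" and ?Fo = "\<lambda>j. if j = a then x else y"
  let ?Fa = "\<lambda>j. idt C (?Fo j)"
  have "small TYPE('u) (Ob ?J)" "small TYPE('u) (Ar ?J)"
    using small_finite[OF U, of "{a, b}"] by simp_all
  then obtain P l where lim: "limit ?J C ?Fo ?Fa P l"
    using complete[unfolded complete_def, rule_format, of ?J ?Fo ?Fa] pair_diagram[OF x y, of a b] by blast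
  then have legs: "P \<in> Ob C" "l a \<in> hom C P x" "l b \<in> hom C P y"
    using pair_cone_iff[OF ab] unfolding limit_def by blast+
  have "\<exists>!h. h \<in> hom C z P \<and> l a \<cdot> h = f1 \<and> l b \<cdot> h = f2"
    if f1: "f1 \<in> hom C z x" and f2: "f2 \<in> hom C z y" for z f1 f2
  proof -
    let ?l' = "\<lambda>j. if j = a then f1 else f2"
    have "z \<in> Ob C" using f1 dom_ob by (auto simp: hom_def)
    then have "cone ?J C ?Fo ?Fa z ?l'" using pair_cone_iff[OF ab] f1 f2 ab by simp
    then have "\<exists>!h. h \<in> hom C z P \<and> (\<forall>j\<in>{a, b}. l j \<cdot> h = ?l' j)"
      using lim[unfolded limit_def, THEN conjunct2, rule_format, of z ?l'] by simp
    then show ?thesis using ab by simp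
  qed
  then show "\<exists>P p1 p2. binary_product C x y P p1 p2"
    using legs unfolding binary_product_def by blast
qed

end

section \<open>Projective filtrations and their push-forwards\<close>

definition push :: "('o, 'm, 'x) cat_scheme \<Rightarrow> 'm \<Rightarrow> 'm set \<Rightarrow> 'm set" where
  "push C g F = {p \<in> Mor_from C (cod C g). comp C p g \<in> F}"

context category
begin

lemma filtration_ar:
  "proj_filtration C d F \<Longrightarrow> p \<in> F \<Longrightarrow> p \<in> Ar C \<and> dom C p = d"
  unfolding proj_filtration_def Mor_from_def by auto

lemma filtration_nonempty: "proj_filtration C d F \<Longrightarrow> \<exists>p. p \<in> F"
  unfolding proj_filtration_def by auto

lemma filtration_directed:
  "proj_filtration C d F \<Longrightarrow> p1 \<in> F \<Longrightarrow> p2 \<in> F \<Longrightarrow> \<exists>q\<in>F. mgeq C q p1 \<and> mgeq C q p2"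
  unfolding proj_filtration_def by auto

lemma filtration_saturated:
  assumes "proj_filtration C d F" and "p \<in> F" and "h \<in> Ar C" and "dom C h = cod C p"
  shows "h \<cdot> p \<in> F"
proof -
  have p: "p \<in> Ar C" "dom C p = d" using filtration_ar[OF assms(1,2)] by auto
  have "mgeq C p (h \<cdot> p)" using assms(3,4) unfolding mgeq_def by blast
  moreover have "h \<cdot> p \<in> Mor_from C d"
    using p assms(3,4) unfolding Mor_from_def by auto
  ultimately show ?thesis using assms(1,2) unfolding proj_filtration_def by blast
qed

lemma reduced_ext_epi:
  "reduced C F \<Longrightarrow> p \<in> F \<Longrightarrow> \<exists>t\<in>F. ext_epi C t \<and> mgeq C t p"
  unfolding reduced_def initial_sub_def by blast

text \<open>The filtration of all morphisms out of x; it is reduced since it is generated by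
  the identity of x.\<close>

lemma full_filtration:
  assumes x: "x \<in> Ob C"
  shows "proj_filtration C x (Mor_from C x)" and "reduced C (Mor_from C x)"
proof -
  have ge: "mgeq C (idt C x) p" if "p \<in> Mor_from C x" for p
  proof -
    have "p \<in> Ar C" "dom C p = x" using that by (auto simp: Mor_from_def)
    then show ?thesis unfolding mgeq_def using x by (intro bexI[of _ p]) auto
  qed
  have ix: "idt C x \<in> Mor_from C x" using x by (auto simp: Mor_from_def)
  show "proj_filtration C x (Mor_from C x)"
    unfolding proj_filtration_def using ge ix by blast
  have "initial_sub C (Mor_from C x) {idt C x}"
    unfolding initial_sub_def using ge ix by blast
  then show "reduced C (Mor_from C x)"
    unfolding reduced_def using id_ext_epi[OF x] by blast
qed

lemma push_iff: "p \<in> push C g F \<longleftrightarrow> p \<in> Ar C \<and> dom C p = cod C g \<and> p \<cdot> g \<in> F"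
  by (simp add: push_def Mor_from_def)

lemma push_mono: "F \<subseteq> G \<Longrightarrow> push C g F \<subseteq> push C g G"
  by (auto simp: push_iff)

lemma push_comp:
  assumes "g \<in> Ar C" and "m \<in> Ar C" and "cod C g = dom C m"
  shows "push C m (push C g F) = push C (m \<cdot> g) F"
proof -
  have "p \<in> push C m (push C g F) \<longleftrightarrow> p \<in> push C (m \<cdot> g) F" for p
  proof (cases "p \<in> Ar C \<and> dom C p = cod C m")
    case True
    then have "(p \<cdot> m) \<cdot> g = p \<cdot> m \<cdot> g" using assoc[OF assms(1,2)] assms(3) by simp
    then show ?thesis using True assms comp_ar by (simp add: push_iff)
  qed (use assms in \<open>auto simp: push_iff\<close>)
  then show ?thesis by blast
qed

lemma push_id:
  assumes "a \<in> Ob C" and "G \<subseteq> Mor_from C a"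
  shows "push C (idt C a) G = G"
  using assms comp_id_dom by (auto simp: push_iff Mor_from_def)

lemma push_saturated:
  assumes F: "proj_filtration C (dom C g) F" and g: "g \<in> Ar C"
    and p: "p \<in> push C g F" and h: "h \<in> Ar C" "dom C h = cod C p"
  shows "h \<cdot> p \<in> push C g F"
proof -
  have p': "p \<in> Ar C" "dom C p = cod C g" "p \<cdot> g \<in> F" using p by (auto simp: push_iff)
  have "(h \<cdot> p) \<cdot> g = h \<cdot> (p \<cdot> g)" using assoc[OF g p'(1) h(1)] p' h by simp
  also have "\<dots> \<in> F" using filtration_saturated[OF F p'(3) h(1)] h p' g by simp
  finally show ?thesis
    unfolding push_iff using p' h comp_ar[OF p'(1) h(1) h(2)[symmetric]] by simp
qed

end

locale em_category = category +
  assumes factorizations: "has_ext_epi_mono_factorizations C"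
    and fill_in: "has_diagonal_fill_in C"
    and products: "has_binary_products C"
begin

lemma factorE:
  assumes "f \<in> Ar C"
  obtains e m where "ext_epi C e" "mono C m" "cod C e = dom C m" "m \<cdot> e = f"
  using assms factorizations unfolding has_ext_epi_mono_factorizations_def by blast

lemma diagonal:
  assumes "ext_epi C e" and "mono C m" and "u \<in> Ar C" and "v \<in> Ar C"
    and "dom C u = dom C e" and "cod C u = dom C m" and "dom C v = cod C e" and "cod C v = cod C m"
    and "v \<cdot> e = m \<cdot> u"
  shows "\<exists>!d. d \<in> Ar C \<and> dom C d = cod C e \<and> cod C d = dom C m \<and> d \<cdot> e = u \<and> m \<cdot> d = v"
  using fill_in assms unfolding has_diagonal_fill_in_def by blast

lemma productE:
  assumes "x \<in> Ob C" and "y \<in> Ob C"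
  obtains P q1 q2 where "binary_product C x y P q1 q2"
  using assms products unfolding has_binary_products_def by blast

text \<open>A morphism that factors through no monomorphism other than isomorphisms is an
  extremal epimorphism: its (extremal epi, mono) factorisation has an invertible mono part.\<close>

lemma extremal_ext_epi:
  assumes e: "e \<in> Ar C"
    and extremal: "\<And>m g. mono C m \<Longrightarrow> g \<in> Ar C \<Longrightarrow> cod C g = dom C m \<Longrightarrow> m \<cdot> g = e \<Longrightarrow> iso C m"
  shows "ext_epi C e"
proof -
  obtain E M where EM: "ext_epi C E" "mono C M" "cod C E = dom C M" "M \<cdot> E = e"
    using factorE[OF e] .
  have E: "E \<in> Ar C" and M: "M \<in> Ar C" using EM ext_epi_ar mono_ar by auto
  have cM: "cod C M = cod C e" using comp_cod[OF E M EM(3)] EM(4) by simp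
  obtain k where k: "k \<in> Ar C" "dom C k = cod C M" "cod C k = dom C M" "M \<cdot> k = idt C (cod C M)"
    using extremal[OF EM(2) E EM(3,4)] by (rule isoE)
  have cancel: "x = y" if x: "x \<in> Ar C" and y: "y \<in> Ar C" and xy: "dom C x = cod C e"
    "dom C y = cod C e" "cod C x = cod C y" "x \<cdot> e = y \<cdot> e" for x y
  proof -
    have "(x \<cdot> M) \<cdot> E = (y \<cdot> M) \<cdot> E"
      using assoc[OF E M x] assoc[OF E M y] EM(3,4) xy cM by simp
    then have xyM: "x \<cdot> M = y \<cdot> M"
      using epiD[of E "x \<cdot> M" "y \<cdot> M"] EM(1,3) M x y xy cM
      by (simp add: ext_epi_def comp_ar)
    have "x = (x \<cdot> M) \<cdot> k" using assoc[OF k(1) M x] k x xy cM comp_id_dom[OF x] by simp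
    also have "\<dots> = (y \<cdot> M) \<cdot> k" using xyM by simp
    also have "\<dots> = y" using assoc[OF k(1) M y] k y xy cM comp_id_dom[OF y] by simp
    finally show ?thesis .
  qed
  have "epi C e" unfolding epi_def using e cancel by blast
  then show ?thesis unfolding ext_epi_def using extremal by blast
qed

text \<open>The push-forward of a filtration is directed: two members are dominated by their
  pairing into a binary product, and the pairing lies in the push-forward because F is directed.\<close>

lemma push_directed:
  assumes F: "proj_filtration C (dom C g) F" and g: "g \<in> Ar C"
    and p1: "p1 \<in> push C g F" and p2: "p2 \<in> push C g F"
  shows "\<exists>q\<in>push C g F. mgeq C q p1 \<and> mgeq C q p2"
proof -
  have a1: "p1 \<in> Ar C" "dom C p1 = cod C g" "p1 \<cdot> g \<in> F"
    and a2: "p2 \<in> Ar C" "dom C p2 = cod C g" "p2 \<cdot> g \<in> F"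
    using p1 p2 by (auto simp: push_iff)
  obtain P q1 q2 where P: "binary_product C (cod C p1) (cod C p2) P q1 q2"
    using productE[OF cod_ob[OF a1(1)] cod_ob[OF a2(1)]] .
  have q: "q1 \<in> hom C P (cod C p1)" "q2 \<in> hom C P (cod C p2)"
    using P unfolding binary_product_def by blast+
  obtain pi where pi: "pi \<in> hom C (cod C g) P" "q1 \<cdot> pi = p1" "q2 \<cdot> pi = p2"
    using product_pairing[OF P, of p1 "cod C g" p2] a1 a2 by (auto simp: hom_def)
  obtain r where r: "r \<in> F" "mgeq C r (p1 \<cdot> g)" "mgeq C r (p2 \<cdot> g)"
    using filtration_directed[OF F a1(3) a2(3)] by blast
  have rA: "r \<in> Ar C" "dom C r = dom C g" using filtration_ar[OF F r(1)] by auto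
  obtain h1 h2 where h: "h1 \<in> Ar C" "dom C h1 = cod C r" "h1 \<cdot> r = p1 \<cdot> g"
    "h2 \<in> Ar C" "dom C h2 = cod C r" "h2 \<cdot> r = p2 \<cdot> g"
    using r(2,3) unfolding mgeq_def by blast
  have "cod C h1 = cod C p1" "cod C h2 = cod C p2"
    using comp_cod[OF rA(1) h(1)] comp_cod[OF rA(1) h(4)] comp_cod[OF g a1(1)] comp_cod[OF g a2(1)]
      h a1 a2 by simp_all
  then obtain rho where rho: "rho \<in> hom C (cod C r) P" "q1 \<cdot> rho = h1" "q2 \<cdot> rho = h2"
    using product_pairing[OF P, of h1 "cod C r" h2] h by (auto simp: hom_def)
  have "rho \<cdot> r = pi \<cdot> g"
  proof (rule product_unique[OF P])
    show "rho \<cdot> r \<in> hom C (dom C g) P" "pi \<cdot> g \<in> hom C (dom C g) P"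
      using rho pi rA g comp_ar by (auto simp: hom_def)
    show "q1 \<cdot> rho \<cdot> r = q1 \<cdot> pi \<cdot> g" "q2 \<cdot> rho \<cdot> r = q2 \<cdot> pi \<cdot> g"
      using assoc[OF rA(1) _ _, of rho q1] assoc[OF rA(1) _ _, of rho q2]
        assoc[OF g _ _, of pi q1] assoc[OF g _ _, of pi q2] rho pi q h
      by (auto simp: hom_def)
  qed
  moreover have "rho \<cdot> r \<in> F"
    using filtration_saturated[OF F r(1)] rho by (simp add: hom_def)
  ultimately have "pi \<cdot> g \<in> F" by simp
  then have "pi \<in> push C g F" using pi by (auto simp: push_iff hom_def)
  moreover have "mgeq C pi p1" "mgeq C pi p2"
    using pi q unfolding mgeq_def hom_def by auto
  ultimately show ?thesis by blast
qed

text \<open>The push-forward of a reduced filtration is reduced: a member phi is dominated by the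
  extremal-epi part E of its factorisation, and E lies in the push-forward by the diagonal
  fill-in against an extremal epimorphism of F dominating phi o g.\<close>

lemma push_reduced:
  assumes F: "proj_filtration C (dom C g) F" and R: "reduced C F" and g: "g \<in> Ar C"
    and phi: "phi \<in> push C g F"
  shows "\<exists>E\<in>push C g F. ext_epi C E \<and> mgeq C E phi"
proof -
  have ph: "phi \<in> Ar C" "dom C phi = cod C g" "phi \<cdot> g \<in> F" using phi by (auto simp: push_iff)
  obtain t where t: "t \<in> F" "ext_epi C t" "mgeq C t (phi \<cdot> g)" using reduced_ext_epi[OF R ph(3)] by blast
  obtain h where h: "h \<in> Ar C" "dom C h = cod C t" "h \<cdot> t = phi \<cdot> g" using t(3) unfolding mgeq_def by blast
  obtain E M where EM: "ext_epi C E" "mono C M" "cod C E = dom C M" "M \<cdot> E = phi"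
    using factorE[OF ph(1)] .
  have E: "E \<in> Ar C" and M: "M \<in> Ar C" using EM ext_epi_ar mono_ar by auto
  have tA: "t \<in> Ar C" "dom C t = dom C g" using filtration_ar[OF F t(1)] by auto
  have dE: "dom C E = cod C g" using comp_dom[OF E M EM(3)] EM(4) ph(2) by simp
  have Eg: "E \<cdot> g \<in> Ar C" "dom C (E \<cdot> g) = dom C g" "cod C (E \<cdot> g) = cod C E"
    using E g dE comp_ar by auto
  have square: "h \<cdot> t = M \<cdot> (E \<cdot> g)" using assoc[OF g E M] dE EM(3,4) h(3) by simp
  have "cod C h = cod C M"
    using comp_cod[OF tA(1) h(1)] comp_cod[OF g ph(1)] comp_cod[OF E M EM(3)] h(2,3) EM(4) ph(2)
    by simp
  then obtain d where d: "d \<in> Ar C" "dom C d = cod C t" "d \<cdot> t = E \<cdot> g"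
    using diagonal[OF t(2) EM(2) Eg(1) h(1)] Eg h tA EM(3) square by auto
  have "E \<cdot> g \<in> F" using filtration_saturated[OF F t(1) d(1,2)] d(3) by simp
  then have "E \<in> push C g F" using E dE by (simp add: push_iff)
  moreover have "mgeq C E phi" using M EM unfolding mgeq_def by auto
  ultimately show ?thesis using EM(1) by blast
qed

lemma push_filtration:
  assumes F: "proj_filtration C (dom C g) F" and R: "reduced C F" and g: "g \<in> Ar C"
    and ne: "push C g F \<noteq> {}"
  shows "proj_filtration C (cod C g) (push C g F)" and "reduced C (push C g F)"
proof -
  show "proj_filtration C (cod C g) (push C g F)"
    unfolding proj_filtration_def
  proof (intro conjI ballI impI)
    show "push C g F \<subseteq> Mor_from C (cod C g)" by (auto simp: push_def)
    show "push C g F \<noteq> {}" by (rule ne)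
    show "\<exists>q\<in>push C g F. mgeq C q p1 \<and> mgeq C q p2" if "p1 \<in> push C g F" "p2 \<in> push C g F" for p1 p2
      using push_directed[OF F g that] .
    show "p2 \<in> push C g F" if "p1 \<in> push C g F" "p2 \<in> Mor_from C (cod C g)" "mgeq C p1 p2" for p1 p2
      using that push_saturated[OF F g] unfolding mgeq_def by blast
  qed
  have "initial_sub C (push C g F) {E \<in> push C g F. ext_epi C E}"
    unfolding initial_sub_def using push_reduced[OF F R g] by blast
  then show "reduced C (push C g F)" unfolding reduced_def by blast
qed

end

section \<open>The category Q(D)\<close>

context category
begin

lemma Qcat_Ob_iff:
  "X \<in> Ob (Qcat C) \<longleftrightarrow> fst X \<in> Ob C \<and> proj_filtration C (fst X) (snd X) \<and> reduced C (snd X)"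
  by (cases X) (simp add: Qcat_def Let_def)

lemma Qcat_simps [simp]:
  "dom (Qcat C) (f, X, Y) = X" "cod (Qcat C) (f, X, Y) = Y"
  "idt (Qcat C) X = (idt C (fst X), X, X)"
  "comp (Qcat C) (g, Y', Z) (f, X, Y) = (g \<cdot> f, X, Z)"
  by (simp_all add: Qcat_def Let_def)

lemma Qcat_Ar_iff:
  "(f, X, Y) \<in> Ar (Qcat C) \<longleftrightarrow> X \<in> Ob (Qcat C) \<and> Y \<in> Ob (Qcat C) \<and>
     f \<in> Ar C \<and> dom C f = fst X \<and> cod C f = fst Y \<and> snd Y \<subseteq> push C f (snd X)"
proof -
  have "pull C f (snd Y) \<subseteq> snd X \<longleftrightarrow> snd Y \<subseteq> push C f (snd X)"
    if "proj_filtration C (fst Y) (snd Y)" "cod C f = fst Y"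
    using that filtration_ar by (auto simp: pull_def push_iff)
  then show ?thesis
    by (auto simp: Qcat_def Let_def hom_def Qcat_Ob_iff[unfolded Qcat_def Let_def, simplified])
qed

lemma Qcat_ArE:
  assumes "x \<in> Ar (Qcat C)"
  obtains f X Y where "x = (f, X, Y)" "X \<in> Ob (Qcat C)" "Y \<in> Ob (Qcat C)" "f \<in> Ar C"
    "dom C f = fst X" "cod C f = fst Y" "snd Y \<subseteq> push C f (snd X)"
  using assms by (cases x) (auto simp: Qcat_Ar_iff)

text \<open>Q(D) is a category; composition is well defined because push-forward is functorial.\<close>

lemma Qcat_is_cat: "is_cat (Qcat C)"
  unfolding is_cat_def
proof (intro conjI ballI impI)
  fix x assume "x \<in> Ar (Qcat C)"
  then show "dom (Qcat C) x \<in> Ob (Qcat C)" "cod (Qcat C) x \<in> Ob (Qcat C)"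
    by (auto elim: Qcat_ArE)
next
  fix X assume X: "X \<in> Ob (Qcat C)"
  then have "fst X \<in> Ob C" "snd X \<subseteq> Mor_from C (fst X)"
    by (auto simp: Qcat_Ob_iff proj_filtration_def)
  then show "idt (Qcat C) X \<in> Ar (Qcat C)"
    using X push_id by (auto simp: Qcat_Ar_iff)
  show "dom (Qcat C) (idt (Qcat C) X) = X" "cod (Qcat C) (idt (Qcat C) X) = X" by simp_all
next
  fix x y assume x: "x \<in> Ar (Qcat C)" and y: "y \<in> Ar (Qcat C)" and xy: "cod (Qcat C) x = dom (Qcat C) y"
  obtain f X Y where f: "x = (f, X, Y)" "X \<in> Ob (Qcat C)" "f \<in> Ar C" "dom C f = fst X"
    "cod C f = fst Y" "snd Y \<subseteq> push C f (snd X)" using x by (rule Qcat_ArE)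
  obtain g Z where g: "y = (g, Y, Z)" "Z \<in> Ob (Qcat C)" "g \<in> Ar C" "dom C g = fst Y"
    "cod C g = fst Z" "snd Z \<subseteq> push C g (snd Y)" using y xy f(1) by (elim Qcat_ArE) simp
  have "snd Z \<subseteq> push C (g \<cdot> f) (snd X)"
    using g(6) push_mono[OF f(6), of g] push_comp[OF f(3) g(3)] f(5) g(4) by simp
  then show "comp (Qcat C) y x \<in> Ar (Qcat C)"
    using f g comp_ar by (simp add: Qcat_Ar_iff)
  show "dom (Qcat C) (comp (Qcat C) y x) = dom (Qcat C) x"
    "cod (Qcat C) (comp (Qcat C) y x) = cod (Qcat C) y" using f g by simp_all
next
  fix x assume "x \<in> Ar (Qcat C)"
  then obtain f X Y where "x = (f, X, Y)" "f \<in> Ar C" "dom C f = fst X" "cod C f = fst Y"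
    by (elim Qcat_ArE)
  then show "comp (Qcat C) (idt (Qcat C) (cod (Qcat C) x)) x = x"
    "comp (Qcat C) x (idt (Qcat C) (dom (Qcat C) x)) = x"
    by (auto simp: id_left id_right)
next
  fix x y z assume "x \<in> Ar (Qcat C)" "y \<in> Ar (Qcat C)" "z \<in> Ar (Qcat C)"
    and "cod (Qcat C) x = dom (Qcat C) y \<and> cod (Qcat C) y = dom (Qcat C) z"
  then show "comp (Qcat C) z (comp (Qcat C) y x) = comp (Qcat C) (comp (Qcat C) z y) x"
    by (elim Qcat_ArE) (auto simp: assoc)
qed

text \<open>Every object x of D carries the greatest filtration Mor_from x; any morphism of D out
  of x becomes a morphism of Q(D) out of (x, Mor_from x).  These objects detect monomorphisms.\<close>

lemma full_filtration_arrow: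
  assumes f: "f \<in> Ar C" and X: "X \<in> Ob (Qcat C)" and "cod C f = fst X"
  shows "(f, (dom C f, Mor_from C (dom C f)), X) \<in> Ar (Qcat C)"
proof -
  have "snd X \<subseteq> Mor_from C (fst X)" using X by (simp add: Qcat_Ob_iff proj_filtration_def)
  then have "snd X \<subseteq> push C f (Mor_from C (dom C f))"
    using f assms(3) comp_ar by (auto simp: push_iff Mor_from_def)
  then show ?thesis
    using assms full_filtration[OF dom_ob[OF f]] dom_ob[OF f] by (simp add: Qcat_Ar_iff Qcat_Ob_iff)
qed

lemma Qcat_mono_iff:
  assumes m: "(m, X, Y) \<in> Ar (Qcat C)"
  shows "mono (Qcat C) (m, X, Y) \<longleftrightarrow> mono C m"
proof
  assume mono_Q: "mono (Qcat C) (m, X, Y)"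
  have mX: "m \<in> Ar C" "dom C m = fst X" "X \<in> Ob (Qcat C)" using m by (simp_all add: Qcat_Ar_iff)
  show "mono C m"
    unfolding mono_def
  proof (intro conjI ballI impI)
    fix f g assume f: "f \<in> Ar C" and g: "g \<in> Ar C"
      and fg: "cod C f = dom C m \<and> cod C g = dom C m \<and> dom C f = dom C g \<and> m \<cdot> f = m \<cdot> g"
    let ?S = "(dom C f, Mor_from C (dom C f))"
    interpret Q: category "Qcat C" by unfold_locales (rule Qcat_is_cat)
    have A: "(f, ?S, X) \<in> Ar (Qcat C)" "(g, ?S, X) \<in> Ar (Qcat C)"
      using full_filtration_arrow[OF f mX(3)] full_filtration_arrow[OF g mX(3)] fg mX by simp_all
    have "(f, ?S, X) = (g, ?S, X)"
      by (rule Q.monoD[OF mono_Q A]) (use fg mX in simp_all)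
    then show "f = g" by simp
  qed (rule mX(1))
next
  assume "mono C m"
  then show "mono (Qcat C) (m, X, Y)"
    unfolding mono_def using m by (auto elim!: Qcat_ArE)
qed

lemma Qcat_epi:
  assumes "(e, X, Y) \<in> Ar (Qcat C)" and "epi C e"
  shows "epi (Qcat C) (e, X, Y)"
  using assms unfolding epi_def by (auto elim!: Qcat_ArE)

lemma Qcat_iso_dest:
  assumes "iso (Qcat C) (f, X, Y)"
  shows "iso C f" and "push C f (snd X) \<subseteq> snd Y"
proof -
  obtain k' where k': "k' \<in> Ar (Qcat C)" "dom (Qcat C) k' = Y" "cod (Qcat C) k' = X"
    "comp (Qcat C) k' (f, X, Y) = idt (Qcat C) X" "comp (Qcat C) (f, X, Y) k' = idt (Qcat C) Y"
    using assms unfolding iso_def by auto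
  obtain k Y' X' where "k' = (k, Y', X')" using prod_cases3 by blast
  then have k: "(k, Y, X) \<in> Ar (Qcat C)" "k \<cdot> f = idt C (fst X)" "f \<cdot> k = idt C (fst Y)"
    using k' by simp_all
  have f: "f \<in> Ar C" "dom C f = fst X" "cod C f = fst Y"
    using assms unfolding iso_def by (simp_all add: Qcat_Ar_iff)
  have kA: "k \<in> Ar C" "dom C k = fst Y" "cod C k = fst X" "snd X \<subseteq> push C k (snd Y)"
    using k(1) by (simp_all add: Qcat_Ar_iff)
  show "iso C f" unfolding iso_def using f kA k by auto
  have "push C f (snd X) \<subseteq> push C f (push C k (snd Y))" using push_mono[OF kA(4)] .
  also have "\<dots> = push C (idt C (fst Y)) (snd Y)" using push_comp[OF kA(1) f(1)] kA f k(3) by simp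
  also have "\<dots> = snd Y"
    using push_id k(1) by (simp add: Qcat_Ar_iff Qcat_Ob_iff proj_filtration_def)
  finally show "push C f (snd X) \<subseteq> snd Y" .
qed

text \<open>Conversely, an extremal epimorphism e of D with e_*(F1) \<subseteq> F2 is an extremal
  epimorphism of Q(D): the inverse of a mono part of e is again a morphism of Q(D).\<close>

lemma Qcat_ext_epi_intro:
  assumes eQ: "(e, X, Y) \<in> Ar (Qcat C)" and ext: "ext_epi C e"
    and push_le: "push C e (snd X) \<subseteq> snd Y"
  shows "ext_epi (Qcat C) (e, X, Y)"
proof -
  have extremal: "iso (Qcat C) x" if x: "x \<in> Ar (Qcat C)" and y: "y \<in> Ar (Qcat C)" and
    mono_x: "mono (Qcat C) x" and xy: "cod (Qcat C) y = dom (Qcat C) x" "comp (Qcat C) x y = (e, X, Y)"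
    for x y
  proof -
    obtain m A Y' where m: "x = (m, A, Y')" "A \<in> Ob (Qcat C)" "m \<in> Ar C" "dom C m = fst A"
      "cod C m = fst Y'" using x by (rule Qcat_ArE)
    obtain g X' A' where g: "y = (g, X', A')" "g \<in> Ar C" "cod C g = fst A'" "snd A' \<subseteq> push C g (snd X')"
      using y by (rule Qcat_ArE)
    have "Y' = Y" "X' = X" "A' = A" using xy m(1) g(1) by simp_all
    note m = m[unfolded \<open>Y' = Y\<close>] and g = g[unfolded \<open>X' = X\<close> \<open>A' = A\<close>]
    have mg: "m \<cdot> g = e" using xy m(1) g(1) by simp
    have "mono C m" using mono_x x m(1) Qcat_mono_iff by simp
    then obtain k where k: "k \<in> Ar C" "dom C k = fst Y" "cod C k = fst A" "k \<cdot> m = idt C (fst A)"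
      "m \<cdot> k = idt C (fst Y)"
      using ext_epi_extremal[OF ext _ g(2)] g m mg by (metis isoE)
    have "k \<cdot> e = g" using assoc[OF g(2) m(3) k(1)] mg k m g id_left by simp
    then have "snd A \<subseteq> push C k (push C e (snd X))"
      using g(4) push_comp[OF _ k(1), of e] eQ k m by (simp add: Qcat_Ar_iff)
    also have "\<dots> \<subseteq> push C k (snd Y)" using push_mono[OF push_le] .
    finally have "(k, Y, A) \<in> Ar (Qcat C)" using k m eQ by (simp add: Qcat_Ar_iff)
    then show "iso (Qcat C) x"
      unfolding iso_def using x m k by (intro conjI bexI[of _ "(k, Y, A)"]) simp_all
  qed
  show ?thesis
    using Qcat_epi[OF eQ] ext extremal unfolding ext_epi_def by blast
qed

end

context em_category
begin

text \<open>If a morphism f : (d1, F1) \<rightarrow> (d2, F2) of Q(D) factors as f = m o g in D, it factors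
  through the object (cod g, g_*(F1)) of Q(D): the push-forward is non-empty because it
  contains p o m for every p in F2.\<close>

lemma factor_through_push:
  assumes f: "(f, X, Y) \<in> Ar (Qcat C)" and g: "g \<in> Ar C" and m: "m \<in> Ar C"
    and gm: "cod C g = dom C m" and mg: "m \<cdot> g = f"
  defines "Z \<equiv> (cod C g, push C g (snd X))"
  shows "Z \<in> Ob (Qcat C)" and "(g, X, Z) \<in> Ar (Qcat C)" and "(m, Z, Y) \<in> Ar (Qcat C)"
proof -
  have fX: "X \<in> Ob (Qcat C)" "Y \<in> Ob (Qcat C)" "dom C f = fst X" "cod C f = fst Y"
    "snd Y \<subseteq> push C f (snd X)" using f by (simp_all add: Qcat_Ar_iff)
  have X: "proj_filtration C (dom C g) (snd X)" "reduced C (snd X)"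
    using fX(1,3) comp_dom[OF g m gm] mg by (simp_all add: Qcat_Ob_iff)
  have Y_le: "snd Y \<subseteq> push C m (push C g (snd X))"
    using fX(5) push_comp[OF g m gm] mg by simp
  obtain p where "p \<in> snd Y" using filtration_nonempty fX(2) by (auto simp: Qcat_Ob_iff)
  then have "p \<cdot> m \<in> push C g (snd X)" using Y_le by (auto simp: push_iff)
  then have "push C g (snd X) \<noteq> {}" by blast
  then show Z: "Z \<in> Ob (Qcat C)"
    unfolding Z_def using push_filtration[OF X g] cod_ob[OF g] by (simp add: Qcat_Ob_iff)
  show "(g, X, Z) \<in> Ar (Qcat C)"
    using Z fX X g comp_dom[OF g m gm] mg unfolding Z_def by (simp add: Qcat_Ar_iff Qcat_Ob_iff)
  show "(m, Z, Y) \<in> Ar (Qcat C)"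
    using Z fX m gm Y_le comp_cod[OF g m gm] mg unfolding Z_def by (simp add: Qcat_Ar_iff)
qed

text \<open>A mono part m of e lifts, via the factorisation through
  the push-forward, to a mono of Q(D), which must then be invertible.\<close>

lemma Qcat_ext_epi_dest:
  assumes ext: "ext_epi (Qcat C) (e, X, Y)"
  shows "ext_epi C e" and "push C e (snd X) \<subseteq> snd Y"
proof -
  interpret Q: category "Qcat C" by unfold_locales (rule Qcat_is_cat)
  have eQ: "(e, X, Y) \<in> Ar (Qcat C)" using Q.ext_epi_ar[OF ext] .
  then have e: "e \<in> Ar C" by (simp add: Qcat_Ar_iff)
  have lifted: "iso C m \<and> push C e (snd X) \<subseteq> snd Y"
    if m: "mono C m" and g: "g \<in> Ar C" "cod C g = dom C m" and mg: "m \<cdot> g = e" for m g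
  proof -
    let ?Z = "(cod C g, push C g (snd X))"
    note Z = factor_through_push[OF eQ g(1) mono_ar[OF m] g(2) mg]
    have "mono (Qcat C) (m, ?Z, Y)" using Qcat_mono_iff[OF Z(3)] m by simp
    then have "iso (Qcat C) (m, ?Z, Y)"
      using Q.ext_epi_extremal[OF ext _ Z(2)] mg by simp
    moreover have "push C m (push C g (snd X)) = push C e (snd X)"
      using push_comp[OF g(1) mono_ar[OF m] g(2)] mg by simp
    ultimately show ?thesis using Qcat_iso_dest[of m ?Z Y] by simp
  qed
  show "ext_epi C e" by (rule extremal_ext_epi[OF e]) (use lifted in blast)
  have "idt C (cod C e) \<cdot> e = e" using comp_id_cod[OF e] .
  then show "push C e (snd X) \<subseteq> snd Y"
    using lifted[OF id_mono[OF cod_ob[OF e]] e] id_dom[OF cod_ob[OF e]] by simp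
qed

text \<open>Factorisations in Q(D): factor in D and pass through the push-forward along
  the extremal-epi part.\<close>

lemma Qcat_factorizations: "has_ext_epi_mono_factorizations (Qcat C)"
  unfolding has_ext_epi_mono_factorizations_def
proof
  fix x assume "x \<in> Ar (Qcat C)"
  then obtain f X Y where x: "x = (f, X, Y)" and fQ: "(f, X, Y) \<in> Ar (Qcat C)"
    by (metis prod_cases3)
  have f: "f \<in> Ar C" using fQ by (simp add: Qcat_Ar_iff)
  obtain e m where em: "ext_epi C e" "mono C m" "cod C e = dom C m" "m \<cdot> e = f"
    using factorE[OF f] .
  let ?Z = "(cod C e, push C e (snd X))"
  note Z = factor_through_push[OF fQ ext_epi_ar[OF em(1)] mono_ar[OF em(2)] em(3,4)]
  have "ext_epi (Qcat C) (e, X, ?Z)" using Qcat_ext_epi_intro[OF Z(2) em(1)] by simp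
  moreover have "mono (Qcat C) (m, ?Z, Y)" using Qcat_mono_iff[OF Z(3)] em(2) by simp
  ultimately show "\<exists>e m. ext_epi (Qcat C) e \<and> mono (Qcat C) m \<and> cod (Qcat C) e = dom (Qcat C) m \<and>
      comp (Qcat C) m e = x"
    using x em(4) by fastforce
qed

text \<open>Diagonals in Q(D) are the diagonals of D: for a commutative square v o e = m o u in
  Q(D), the diagonal d of D respects the filtrations, F_A \<subseteq> u_*(F_X) = d_*(e_*(F_X)) \<subseteq> d_*(F_Y).\<close>

lemma Qcat_diagonal:
  assumes ext: "ext_epi (Qcat C) (e, X, Y)" and mono: "mono (Qcat C) (m, A, B)"
    and uQ: "(u, X, A) \<in> Ar (Qcat C)" and vQ: "(v, Y, B) \<in> Ar (Qcat C)" and square: "v \<cdot> e = m \<cdot> u"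
  shows "\<exists>!d. (d, Y, A) \<in> Ar (Qcat C) \<and> d \<cdot> e = u \<and> m \<cdot> d = v"
proof -
  interpret Q: category "Qcat C" by unfold_locales (rule Qcat_is_cat)
  have eQ: "(e, X, Y) \<in> Ar (Qcat C)" and mQ: "(m, A, B) \<in> Ar (Qcat C)"
    using Q.ext_epi_ar[OF ext] Q.mono_ar[OF mono] .
  have ext_e: "ext_epi C e" and push_le: "push C e (snd X) \<subseteq> snd Y"
    using Qcat_ext_epi_dest[OF ext] by simp_all
  have mono_m: "mono C m" using mono Qcat_mono_iff[OF mQ] by simp
  have "\<exists>!d. d \<in> Ar C \<and> dom C d = cod C e \<and> cod C d = dom C m \<and> d \<cdot> e = u \<and> m \<cdot> d = v"
    using diagonal[OF ext_e mono_m] square eQ mQ uQ vQ by (simp add: Qcat_Ar_iff)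
  then obtain d where d: "d \<in> Ar C" "dom C d = cod C e" "cod C d = dom C m" "d \<cdot> e = u" "m \<cdot> d = v"
    and d_unique: "\<And>d0. d0 \<in> Ar C \<and> dom C d0 = cod C e \<and> cod C d0 = dom C m \<and> d0 \<cdot> e = u \<and>
      m \<cdot> d0 = v \<Longrightarrow> d0 = d" by blast
  have "snd A \<subseteq> push C u (snd X)" using uQ by (simp add: Qcat_Ar_iff)
  also have "\<dots> = push C d (push C e (snd X))"
    using push_comp[of e d] eQ d by (simp add: Qcat_Ar_iff)
  also have "\<dots> \<subseteq> push C d (snd Y)" using push_mono[OF push_le] .
  finally have "(d, Y, A) \<in> Ar (Qcat C)" using eQ mQ d by (simp add: Qcat_Ar_iff)
  moreover have "d0 = d" if "(d0, Y, A) \<in> Ar (Qcat C)" "d0 \<cdot> e = u" "m \<cdot> d0 = v" for d0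
    using that d_unique eQ mQ by (simp add: Qcat_Ar_iff)
  ultimately show ?thesis using d by blast
qed

lemma Qcat_diagonal_fill_in: "has_diagonal_fill_in (Qcat C)"
  unfolding has_diagonal_fill_in_def
proof (intro allI impI, elim conjE)
  fix e' m' u' v'
  assume ext: "ext_epi (Qcat C) e'" and mono: "mono (Qcat C) m'"
    and u': "u' \<in> Ar (Qcat C)" and v': "v' \<in> Ar (Qcat C)"
    and "dom (Qcat C) u' = dom (Qcat C) e'" "cod (Qcat C) u' = dom (Qcat C) m'"
    and "dom (Qcat C) v' = cod (Qcat C) e'" "cod (Qcat C) v' = cod (Qcat C) m'"
    and "comp (Qcat C) v' e' = comp (Qcat C) m' u'"
  note square' = this(5-9)
  obtain e X Y where e': "e' = (e, X, Y)" by (metis prod_cases3)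
  obtain m A B where m': "m' = (m, A, B)" by (metis prod_cases3)
  obtain u Xu Yu where u'_def: "u' = (u, Xu, Yu)" by (metis prod_cases3)
  obtain v Xv Yv where v'_def: "v' = (v, Xv, Yv)" by (metis prod_cases3)
  have ends: "Xu = X" "Yu = A" "Xv = Y" "Yv = B" and square: "v \<cdot> e = m \<cdot> u"
    using square' unfolding e' m' u'_def v'_def by simp_all
  have "\<exists>!d. (d, Y, A) \<in> Ar (Qcat C) \<and> d \<cdot> e = u \<and> m \<cdot> d = v"
    using Qcat_diagonal[OF ext[unfolded e'] mono[unfolded m'] _ _ square] u' v' u'_def v'_def ends
    by simp
  then obtain d where d: "(d, Y, A) \<in> Ar (Qcat C)" "d \<cdot> e = u" "m \<cdot> d = v"
    and d_unique: "\<And>d0. (d0, Y, A) \<in> Ar (Qcat C) \<and> d0 \<cdot> e = u \<and> m \<cdot> d0 = v \<Longrightarrow> d0 = d"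
    by blast
  show "\<exists>!d'. d' \<in> Ar (Qcat C) \<and> dom (Qcat C) d' = cod (Qcat C) e' \<and>
      cod (Qcat C) d' = dom (Qcat C) m' \<and> comp (Qcat C) d' e' = u' \<and> comp (Qcat C) m' d' = v'"
  proof (rule ex1I[of _ "(d, Y, A)"])
    show "(d, Y, A) \<in> Ar (Qcat C) \<and> dom (Qcat C) (d, Y, A) = cod (Qcat C) e' \<and>
      cod (Qcat C) (d, Y, A) = dom (Qcat C) m' \<and> comp (Qcat C) (d, Y, A) e' = u' \<and>
      comp (Qcat C) m' (d, Y, A) = v'"
      using d unfolding e' m' u'_def v'_def ends by simp
  next
    fix d' assume d': "d' \<in> Ar (Qcat C) \<and> dom (Qcat C) d' = cod (Qcat C) e' \<and>
      cod (Qcat C) d' = dom (Qcat C) m' \<and> comp (Qcat C) d' e' = u' \<and> comp (Qcat C) m' d' = v'"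
    obtain d0 P R where d0: "d' = (d0, P, R)" by (metis prod_cases3)
    have PR: "P = Y" "R = A" and "d0 \<cdot> e = u" "m \<cdot> d0 = v"
      using d' unfolding d0 e' m' u'_def v'_def ends by simp_all
    moreover have "(d0, Y, A) \<in> Ar (Qcat C)" using d'[unfolded d0 PR] by blast
    ultimately show "d' = (d, Y, A)" using d_unique d0 by blast
  qed
qed

end

theorem mainTheorem9:
  fixes C :: "('o, 'm) cat"
  assumes "universe_type TYPE('u)"
    and "is_cat C"
    and "locally_small TYPE('u) C"
    and "complete TYPE('u) C"
    and "cocomplete TYPE('u) C"
    and "ext_co_well_powered TYPE('u) C"
    and "ext_epi_mono_cat C"
  shows "ext_epi_mono_cat (Qcat C)"
proof -
  interpret category C by unfold_locales (rule assms(2))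
  have "has_binary_products C" using complete_has_binary_products[OF assms(1,4)] .
  then interpret em_category C
    using assms(7) unfolding ext_epi_mono_cat_def by unfold_locales auto
  show ?thesis
    unfolding ext_epi_mono_cat_def using Qcat_is_cat Qcat_factorizations Qcat_diagonal_fill_in by blast
qed

end
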